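(* Let $\tilde w_{(1)},\dots,\tilde w_{(m)}$ be fixed real numbers. Suppose that Assumption (I) holds and that conditions (A2a) and (A2b) below hold. Then the following are equivalent: (i) $\sum_{i=1}^m \tilde w_{(i)}\, p_{(i)}(x)=t(x)$ for all $x\in\mathrm{Supp}(\mathbb{P}_X)$; (ii) $E\{\sum_{i=1}^m \tilde w_{(i)}\hat\tau_i\}=\tau$ holds for every potential-outcome model $\{Y(1),Y(0)\}$ in the class $\mathcal{Y}_{\mathrm{all}}$. That is, condition (i) is necessary and sufficient for identification of $\tau$ by $\sum_i\tilde w_{(i)}\hat\tau_i$ without any restriction on the outcome model.
   Context: There are $m$ studies; study $i$ has $n_i$ individuals. Individual $ij$ has study indicator $G_{ij}=i$, binary treatment $Z_{ij}\in\{0,1\}$, covariates $X_{ij}\in\mathbb{R}^p$, potential outcomes $Y_{ij}(0),Y_{ij}(1)$. The individuals are a simple random sample from a study population with probability measure $\mathbb{P}$ (covariate density $p$); $\mathbb{P}_{(i)}$ denotes $\mathbb{P}$ conditional on $G=i$, with covariate density $p_{(i)}$; $\mathbb{P}_X$ is the covariate marginal of $\mathbb{P}$; $\mathbb{P}_z$ is $\mathbb{P}$ conditional on $Z=z$ with covariate marginal $\mathbb{P}_{z,X}$. A target population has probability measure $\mathbb{T}$ with covariate density $t$ and covariate marginal $\mathbb{T}_X$. The estimand is $\tau=E_{\mathbb{T}}\{Y(1)-Y(0)\}$. Only aggregate data are available: for each study $i$ an estimated effect $\hat\tau_i$ (a random variable). Assumption (I): (a) $\mathrm{Supp}(\mathbb{T}_X)\subseteq\mathrm{Supp}(\mathbb{P}_{1,X})\cap\mathrm{Supp}(\mathbb{P}_{0,X})$;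 (b) the conditional distribution of $\{Y(1),Y(0)\}$ given $X$ is the same under $\mathbb{P}_1$ and $\mathbb{P}_0$; (c) the conditional distribution of $\{Y(1),Y(0)\}$ given $X$ is the same under $\mathbb{T}$ and $\mathbb{P}$. (A2a) $\{Y(1),Y(0)\}$ is conditionally independent of $G$ given $X$. (A2b) $E\{\hat\tau_i\}=E_{\mathbb{P}}\{Y(1)-Y(0)\mid G=i\}$ for $i=1,\dots,m$. $\mathcal{Y}_{\mathrm{all}}$ is the class of all outcome models of the form $Y_{ij}(z)=g_z(X_{ij},\varepsilon_{ij,z};\beta_{i,z})$, $z\in\{0,1\}$, where $g_z$ is an arbitrary real-valued function and $\varepsilon_{ij,z}$, $\beta_{i,z}$ are unobserved random vectors (individual-level variability and study-specific heterogeneity). *)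

theory Defs
  imports "HOL-Probability.Probability"
begin

text \<open>Conditioning a probability measure on an event: the library's uniform_measure
  (density indicator E / P(E)). So P conditional on G = i is
  uniform_measure M {w in space M. G w = i}.\<close>

definition cond_event :: "'a measure \<Rightarrow> ('a \<Rightarrow> bool) \<Rightarrow> 'a measure" where
  "cond_event M E = uniform_measure M {\<omega> \<in> space M. E \<omega>}"

text \<open>K is (a version of) the conditional distribution of Y given X under N:
  K is a Markov kernel and P(X in A, Y in B) = E[ 1_A(X) K(X)(B) ].\<close>

definition cond_law ::
  "'a measure \<Rightarrow> ('a \<Rightarrow> 'x::topological_space) \<Rightarrow> ('a \<Rightarrow> 'y::topological_space)
     \<Rightarrow> ('x \<Rightarrow> 'y measure) \<Rightarrow> bool" where
  "cond_law N X Y K \<longleftrightarrow>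
     K \<in> borel \<rightarrow>\<^sub>M prob_algebra borel \<and>
     (\<forall>A \<in> sets borel. \<forall>B \<in> sets borel.
        emeasure N {\<omega> \<in> space N. X \<omega> \<in> A \<and> Y \<omega> \<in> B}
          = (\<integral>\<^sup>+ \<omega>. indicator A (X \<omega>) * emeasure (K (X \<omega>)) B \<partial>N))"

text \<open>Same conditional distribution of Y given X under N1 and N2 (with Y, X possibly on
  different spaces): a common version of the conditional law exists.\<close>

definition same_cond_law ::
  "'a measure \<Rightarrow> ('a \<Rightarrow> 'x::topological_space) \<Rightarrow> ('a \<Rightarrow> 'y::topological_space)
   \<Rightarrow> 'b measure \<Rightarrow> ('b \<Rightarrow> 'x) \<Rightarrow> ('b \<Rightarrow> 'y) \<Rightarrow> bool" where
  "same_cond_law N1 X1 Y1 N2 X2 Y2 \<longleftrightarrow> (\<exists>K. cond_law N1 X1 Y1 K \<and> cond_law N2 X2 Y2 K)"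

text \<open>The outcome-model class Y_all: Y(z) = g_z(X, eps_z; beta_{G,z}) with g_z arbitrary and
  eps_z, beta_{i,z} unobserved random vectors (componentwise measurable, components indexed
  by nat).\<close>

definition in_Y_all ::
  "'a measure \<Rightarrow> ('a \<Rightarrow> nat) \<Rightarrow> ('a \<Rightarrow> 'x) \<Rightarrow> ('a \<Rightarrow> real) \<Rightarrow> ('a \<Rightarrow> real) \<Rightarrow> bool" where
  "in_Y_all M G X Y1 Y0 \<longleftrightarrow>
     (\<exists>(g :: bool \<Rightarrow> 'x \<Rightarrow> (nat \<Rightarrow> real) \<Rightarrow> (nat \<Rightarrow> real) \<Rightarrow> real)
        (eps :: bool \<Rightarrow> 'a \<Rightarrow> nat \<Rightarrow> real) (beta :: nat \<Rightarrow> bool \<Rightarrow> 'a \<Rightarrow> nat \<Rightarrow> real).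
       (\<forall>z k. (\<lambda>\<omega>. eps z \<omega> k) \<in> borel_measurable M) \<and>
       (\<forall>i z k. (\<lambda>\<omega>. beta i z \<omega> k) \<in> borel_measurable M) \<and>
       (\<forall>\<omega> \<in> space M.
          Y1 \<omega> = g True (X \<omega>) (eps True \<omega>) (beta (G \<omega>) True \<omega>) \<and>
          Y0 \<omega> = g False (X \<omega>) (eps False \<omega>) (beta (G \<omega>) False \<omega>)))"

end

theory Submission
  imports Defs
begin

text \<open>
  (i) implies (ii): by (A2a) all studies share one conditional law K of (Y(1), Y(0)) given X.
  Mixing over the studies, K is also a version of this conditional law in the pooled study
  population. Two versions of a conditional law agree P_X-almost everywhere, and (I)(a) makes T_X
  absolutely continuous with respect to P_X, so by (I)(c) K describes the target population as
  well. Every estimand is therefore the integral of a kernel average of Y(1) - Y(0) against the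
  corresponding covariate density, and the identity of densities, which holds trivially where p
  vanishes because all p_(i) and t vanish there, carries over to the estimands (separately for
  the positive and the negative part of the integrand).

  (ii) implies (i): for the outcome model Y(1) = f(X), Y(0) = 0 with a bounded f, (ii) says that
  the integral of (sum_i w_i p_(i) - t) f vanishes; the choice f = sgn (sum_i w_i p_(i) - t)
  shows that the density identity holds almost everywhere.
\<close>

section \<open>Conditioning on an event\<close>

lemma sets_cond_event[simp, measurable_cong]: "sets (cond_event M E) = sets M"
  by (simp add: cond_event_def)

lemma space_cond_event[simp]: "space (cond_event M E) = space M"
  by (simp add: cond_event_def)

lemma measurable_cond_event[simp]: "measurable (cond_event M E) N = measurable M N"
  by (rule measurable_cong_sets) simp_all

lemma prob_space_cond_event:
  assumes "finite_measure M" "{\<omega>\<in>space M. E \<omega>} \<in> sets M" "measure M {\<omega>\<in>space M. E \<omega>} > 0"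
  shows "prob_space (cond_event M E)"
  using assms unfolding cond_event_def
  by (intro prob_space_uniform_measure) (auto simp: finite_measure.emeasure_eq_measure)

lemma integrable_cond_event:
  fixes f :: "'a \<Rightarrow> real"
  assumes "finite_measure M" "integrable M f"
    and A: "{\<omega>\<in>space M. E \<omega>} \<in> sets M" "measure M {\<omega>\<in>space M. E \<omega>} > 0"
  shows "integrable (cond_event M E) f"
proof -
  interpret finite_measure M by fact
  let ?A = "{\<omega>\<in>space M. E \<omega>}"
  have "cond_event M E = density M (\<lambda>\<omega>. ennreal (indicator ?A \<omega> / measure M ?A))"
    unfolding cond_event_def uniform_measure_def using A
    by (intro density_cong) (auto simp: emeasure_eq_measure divide_ennreal[of 1, simplified] split: split_indicator)
  then show ?thesis
    using assms integrable_mult_indicator[OF A(1) assms(2)] by (simp add: integrable_density)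
qed

lemma nn_integral_cond_event_partition:
  assumes "finite_measure M" and G: "G \<in> M \<rightarrow>\<^sub>M count_space UNIV" and "finite I"
    and AE_G: "AE \<omega> in M. G \<omega> \<in> I" and pos: "\<forall>i\<in>I. measure M {\<omega>\<in>space M. G \<omega> = i} > 0"
    and f: "f \<in> borel_measurable M"
  shows "(\<integral>\<^sup>+\<omega>. f \<omega> \<partial>M)
    = (\<Sum>i\<in>I. ennreal (measure M {\<omega>\<in>space M. G \<omega> = i}) * (\<integral>\<^sup>+\<omega>. f \<omega> \<partial>cond_event M (\<lambda>\<omega>. G \<omega> = i)))"
proof -
  interpret finite_measure M by fact
  let ?S = "\<lambda>i. {\<omega>\<in>space M. G \<omega> = i}"
  have S: "?S i \<in> sets M" for i using G by measurable
  have "ennreal (measure M (?S i)) * (\<integral>\<^sup>+\<omega>. f \<omega> \<partial>cond_event M (\<lambda>\<omega>. G \<omega> = i))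
      = (\<integral>\<^sup>+\<omega>. f \<omega> * indicator (?S i) \<omega> \<partial>M)" if "i \<in> I" for i
    using pos[rule_format, OF that] f S unfolding cond_event_def
    by (simp add: nn_integral_uniform_measure emeasure_eq_measure ennreal_times_divide
        mult.commute[of "ennreal _"] mult_divide_eq_ennreal)
  then have "(\<Sum>i\<in>I. ennreal (measure M (?S i)) * (\<integral>\<^sup>+\<omega>. f \<omega> \<partial>cond_event M (\<lambda>\<omega>. G \<omega> = i)))
      = (\<integral>\<^sup>+\<omega>. (\<Sum>i\<in>I. f \<omega> * indicator (?S i) \<omega>) \<partial>M)"
    using f S by (simp add: nn_integral_sum)
  also have "\<dots> = (\<integral>\<^sup>+\<omega>. f \<omega> \<partial>M)"
    using AE_G by (intro nn_integral_cong_AE) (auto simp: indicator_def \<open>finite I\<close>)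
  finally show ?thesis ..
qed

section \<open>Covariate densities of mixtures\<close>

lemma integrable_distributed_density:
  assumes "finite_measure M" "distributed M N X (\<lambda>x. ennreal (q x))" "\<And>x. x \<in> space N \<Longrightarrow> 0 \<le> q x"
  shows "integrable N q"
  using distributed_integrable[OF assms(2) _ assms(3), of "\<lambda>_. 1"] assms(1)
  by (simp add: finite_measure.integrable_const)

lemma nn_integral_weighted_sum:
  fixes c :: "'i \<Rightarrow> real" and a :: "'i \<Rightarrow> 'x \<Rightarrow> real" and g :: "'x \<Rightarrow> ennreal"
  assumes "finite I" and "\<forall>i\<in>I. 0 \<le> c i" and "\<forall>i\<in>I. \<forall>x. 0 \<le> a i x"
    and "\<forall>i\<in>I. a i \<in> borel_measurable N" and "g \<in> borel_measurable N"
  shows "(\<integral>\<^sup>+x. ennreal (\<Sum>i\<in>I. c i * a i x) * g x \<partial>N)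
    = (\<Sum>i\<in>I. ennreal (c i) * (\<integral>\<^sup>+x. ennreal (a i x) * g x \<partial>N))"
proof -
  have "(\<integral>\<^sup>+x. ennreal (\<Sum>i\<in>I. c i * a i x) * g x \<partial>N)
      = (\<integral>\<^sup>+x. (\<Sum>i\<in>I. ennreal (c i) * (ennreal (a i x) * g x)) \<partial>N)"
    using assms by (intro nn_integral_cong)
      (simp add: sum_ennreal[symmetric] sum_distrib_right ennreal_mult mult.assoc)
  also have "\<dots> = (\<Sum>i\<in>I. (\<integral>\<^sup>+x. ennreal (c i) * (ennreal (a i x) * g x) \<partial>N))"
    using assms by (intro nn_integral_sum) auto
  also have "\<dots> = (\<Sum>i\<in>I. ennreal (c i) * (\<integral>\<^sup>+x. ennreal (a i x) * g x \<partial>N))"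
    using assms by (intro sum.cong refl nn_integral_cmult) auto
  finally show ?thesis .
qed

lemma distributed_cond_event_mixture:
  fixes X :: "'a \<Rightarrow> 'x::euclidean_space"
  assumes "finite_measure M" and G: "G \<in> M \<rightarrow>\<^sub>M count_space UNIV" and "finite I"
    and AE_G: "AE \<omega> in M. G \<omega> \<in> I" and pos: "\<forall>i\<in>I. measure M {\<omega>\<in>space M. G \<omega> = i} > 0"
    and p: "distributed M lborel X (\<lambda>x. ennreal (p x))" "\<forall>x. 0 \<le> p x"
    and q: "\<forall>i\<in>I. distributed (cond_event M (\<lambda>\<omega>. G \<omega> = i)) lborel X (\<lambda>x. ennreal (q i x))"
      "\<forall>i x. 0 \<le> q i x"
  shows "AE x in lborel. p x = (\<Sum>i\<in>I. measure M {\<omega>\<in>space M. G \<omega> = i} * q i x)"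
proof -
  let ?P = "\<lambda>i. measure M {\<omega>\<in>space M. G \<omega> = i}"
  have [measurable]: "p \<in> borel_measurable borel"
    using distributed_real_measurable[OF _ p(1)] p(2) by simp
  have [measurable]: "X \<in> M \<rightarrow>\<^sub>M borel"
    using distributed_measurable[OF p(1)] by simp
  have q_meas: "q i \<in> borel_measurable borel" if "i \<in> I" for i
    using distributed_real_measurable[OF _ q(1)[rule_format, OF that]] q(2) by simp
  have "AE x in lborel. ennreal (p x) = ennreal (\<Sum>i\<in>I. ?P i * q i x)"
  proof (rule sigma_finite_measure.density_unique2[OF sigma_finite_lborel])
    fix A :: "'x set" assume "A \<in> sets lborel"
    then have [measurable]: "A \<in> sets borel" by simp
    have "(\<integral>\<^sup>+x\<in>A. ennreal (p x) \<partial>lborel) = (\<integral>\<^sup>+\<omega>. indicator A (X \<omega>) \<partial>M)"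
      using p by (simp add: distributed_nn_integral)
    also have "\<dots> = (\<Sum>i\<in>I. ennreal (?P i) * (\<integral>\<^sup>+\<omega>. indicator A (X \<omega>) \<partial>cond_event M (\<lambda>\<omega>. G \<omega> = i)))"
      using assms(1-5) by (rule nn_integral_cond_event_partition) simp
    also have "\<dots> = (\<Sum>i\<in>I. ennreal (?P i) * (\<integral>\<^sup>+x. ennreal (q i x) * indicator A x \<partial>lborel))"
      using q(1) by (intro sum.cong refl arg_cong2[where f="(*)"] distributed_nn_integral[symmetric]) auto
    also have "\<dots> = (\<integral>\<^sup>+x\<in>A. ennreal (\<Sum>i\<in>I. ?P i * q i x) \<partial>lborel)"
      using \<open>finite I\<close> q(2) q_meas by (subst nn_integral_weighted_sum) auto
    finally show "(\<integral>\<^sup>+x\<in>A. ennreal (p x) \<partial>lborel) = (\<integral>\<^sup>+x\<in>A. ennreal (\<Sum>i\<in>I. ?P i * q i x) \<partial>lborel)" .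
  qed (use q_meas in simp_all)
  moreover have "0 \<le> (\<Sum>i\<in>I. ?P i * q i x)" for x
    using q(2) by (simp add: sum_nonneg)
  ultimately show ?thesis
    using p(2) by simp
qed

lemma AE_mixture_component_vanishes:
  fixes q :: "'i \<Rightarrow> 'x \<Rightarrow> real"
  assumes "finite I" and "AE x in N. p x = (\<Sum>i\<in>I. c i * q i x)"
    and "\<forall>i\<in>I. c i > 0" and "\<forall>i x. 0 \<le> q i x" and "j \<in> I"
  shows "AE x in N. p x = 0 \<longrightarrow> q j x = 0"
  using assms(2)
proof eventually_elim
  case (elim x)
  show ?case
  proof
    assume "p x = 0"
    then have "\<forall>i\<in>I. c i * q i x = 0"
      using elim assms(1,3,4) by (subst sum_nonneg_eq_0_iff[symmetric]) (auto intro: less_imp_le)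
    then show "q j x = 0" using assms(3,5) by force
  qed
qed

lemma AE_density_vanishes_of_support:
  fixes Z :: "'a \<Rightarrow> 'z::finite" and X :: "'a \<Rightarrow> 'x::euclidean_space" and t :: "'x \<Rightarrow> real"
  assumes "finite_measure M" and "Z \<in> M \<rightarrow>\<^sub>M count_space UNIV"
    and pos: "\<forall>z. measure M {\<omega>\<in>space M. Z \<omega> = z} > 0"
    and p: "distributed M lborel X (\<lambda>x. ennreal (p x))" "\<forall>x. 0 \<le> p x"
    and q: "\<forall>z. distributed (cond_event M (\<lambda>\<omega>. Z \<omega> = z)) lborel X (\<lambda>x. ennreal (q z x))"
      "\<forall>z x. 0 \<le> q z x"
    and t: "\<forall>x. 0 \<le> t x" and support: "{x. t x > 0} \<subseteq> {x. q z x > 0}"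
  shows "AE x in lborel. p x = 0 \<longrightarrow> t x = 0"
proof -
  have "AE x in lborel. p x = (\<Sum>z\<in>UNIV. measure M {\<omega>\<in>space M. Z \<omega> = z} * q z x)"
    using assms(1,2) pos p q by (intro distributed_cond_event_mixture) auto
  then have "AE x in lborel. p x = 0 \<longrightarrow> q z x = 0"
    using pos q(2) by (intro AE_mixture_component_vanishes) auto
  then show ?thesis
  proof eventually_elim
    case (elim x)
    then have "p x = 0 \<longrightarrow> \<not> t x > 0"
      using support by auto
    then show ?case
      using t[rule_format, of x] by auto
  qed
qed

lemma AE_weighted_density_balance:
  fixes X :: "'a \<Rightarrow> 'x::euclidean_space"
  assumes "finite_measure M" and "G \<in> M \<rightarrow>\<^sub>M count_space UNIV" and "finite I"
    and "AE \<omega> in M. G \<omega> \<in> I" and pos: "\<forall>i\<in>I. measure M {\<omega>\<in>space M. G \<omega> = i} > 0"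
    and p: "distributed M lborel X (\<lambda>x. ennreal (p x))" "\<forall>x. 0 \<le> p x"
    and q: "\<forall>i\<in>I. distributed (cond_event M (\<lambda>\<omega>. G \<omega> = i)) lborel X (\<lambda>x. ennreal (q i x))"
      "\<forall>i x. 0 \<le> q i x"
    and support: "AE x in lborel. p x = 0 \<longrightarrow> t x = 0"
    and balance: "AE x in lborel. p x > 0 \<longrightarrow> (\<Sum>i\<in>I. w i * q i x) = t x"
  shows "AE x in lborel. (\<Sum>i\<in>I. w i * q i x) = t x"
proof -
  have "AE x in lborel. p x = (\<Sum>i\<in>I. measure M {\<omega>\<in>space M. G \<omega> = i} * q i x)"
    using assms(1-5) p q by (rule distributed_cond_event_mixture)
  then have "AE x in lborel. \<forall>i\<in>I. p x = 0 \<longrightarrow> q i x = 0"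
    using \<open>finite I\<close> pos q(2) by (intro AE_finite_allI AE_mixture_component_vanishes) auto
  with balance support show ?thesis
  proof eventually_elim
    case (elim x)
    show ?case
    proof (cases "p x > 0")
      case False
      then have "p x = 0" using p(2)[rule_format, of x] by linarith
      then show ?thesis using elim by simp
    qed (use elim in simp)
  qed
qed

lemma absolutely_continuous_distributed:
  fixes X :: "'a \<Rightarrow> 'x::euclidean_space"
  assumes p: "distributed M lborel X (\<lambda>x. ennreal (p x))" "\<forall>x. 0 \<le> p x"
    and t: "distributed T lborel Xt (\<lambda>x. ennreal (t x))"
    and vanish: "AE x in lborel. p x = 0 \<longrightarrow> t x = 0"
  shows "absolutely_continuous (distr M borel X) (distr T borel Xt)"
proof -
  have "distr M borel X = density lborel (\<lambda>x. ennreal (p x))"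
    "distr T borel Xt = density lborel (\<lambda>x. ennreal (t x))"
    using distributed_distr_eq_density[OF p(1)] distributed_distr_eq_density[OF t]
    by (simp_all add: distr_cong[OF refl sets_lborel[symmetric]])
  moreover have "A \<in> null_sets (density lborel (\<lambda>x. ennreal (t x)))"
    if "A \<in> null_sets (density lborel (\<lambda>x. ennreal (p x)))" for A
  proof -
    have "A \<in> sets borel" "AE x in lborel. x \<in> A \<longrightarrow> p x = 0"
      using that p distributed_borel_measurable[OF p(1)] by (auto simp: null_sets_density_iff)
    with vanish show ?thesis
      using distributed_borel_measurable[OF t] by (auto simp: null_sets_density_iff)
  qed
  ultimately show ?thesis
    unfolding absolutely_continuous_def by auto
qed

section \<open>Conditional laws given by kernels\<close>

lemma cond_law_subprob_kernel:
  "cond_law N X Y K \<Longrightarrow> K \<in> borel \<rightarrow>\<^sub>M subprob_algebra borel"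
  unfolding cond_law_def by (blast intro: measurable_prob_algebraD)

lemma cond_law_emeasure:
  "cond_law N X Y K \<Longrightarrow> A \<in> sets borel \<Longrightarrow> B \<in> sets borel \<Longrightarrow>
    emeasure N {\<omega> \<in> space N. X \<omega> \<in> A \<and> Y \<omega> \<in> B}
      = (\<integral>\<^sup>+ \<omega>. indicator A (X \<omega>) * emeasure (K (X \<omega>)) B \<partial>N)"
  unfolding cond_law_def by blast

lemma cond_law_deterministic:
  fixes F :: "'x::topological_space \<Rightarrow> 'y::topological_space"
  assumes X: "X \<in> N \<rightarrow>\<^sub>M borel" and F: "F \<in> borel_measurable borel"
  shows "cond_law N X (\<lambda>\<omega>. F (X \<omega>)) (\<lambda>x. return borel (F x))"
  unfolding cond_law_def
proof (intro conjI ballI)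
  show "(\<lambda>x. return borel (F x)) \<in> borel \<rightarrow>\<^sub>M prob_algebra borel"
    using F by (intro measurable_compose[OF _ measurable_return_prob_space])
  fix A B assume [measurable]: "A \<in> sets (borel :: 'x measure)" "B \<in> sets (borel :: 'y measure)"
  have "{\<omega> \<in> space N. X \<omega> \<in> A \<and> F (X \<omega>) \<in> B} \<in> sets N"
    using X F by measurable
  then have "emeasure N {\<omega> \<in> space N. X \<omega> \<in> A \<and> F (X \<omega>) \<in> B}
      = (\<integral>\<^sup>+ \<omega>. indicator {\<omega> \<in> space N. X \<omega> \<in> A \<and> F (X \<omega>) \<in> B} \<omega> \<partial>N)"
    by simp
  also have "\<dots> = (\<integral>\<^sup>+ \<omega>. indicator A (X \<omega>) * emeasure (return borel (F (X \<omega>))) B \<partial>N)"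
    by (intro nn_integral_cong) (simp split: split_indicator)
  finally show "emeasure N {\<omega> \<in> space N. X \<omega> \<in> A \<and> F (X \<omega>) \<in> B}
      = (\<integral>\<^sup>+ \<omega>. indicator A (X \<omega>) * emeasure (return borel (F (X \<omega>))) B \<partial>N)" .
qed

lemma same_cond_law_covariate_function:
  assumes "X1 \<in> N1 \<rightarrow>\<^sub>M borel" "X2 \<in> N2 \<rightarrow>\<^sub>M borel" "F \<in> borel_measurable borel"
  shows "same_cond_law N1 X1 (\<lambda>\<omega>. F (X1 \<omega>)) N2 X2 (\<lambda>\<omega>. F (X2 \<omega>))"
  unfolding same_cond_law_def
  using cond_law_deterministic[OF assms(1,3)] cond_law_deterministic[OF assms(2,3)] by blast

lemma cond_law_nn_integral:
  assumes cl: "cond_law N X Y K" and X: "X \<in> N \<rightarrow>\<^sub>M borel" and Y: "Y \<in> N \<rightarrow>\<^sub>M borel"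
    and \<psi>: "\<psi> \<in> borel_measurable borel"
  shows "(\<integral>\<^sup>+\<omega>. \<psi> (Y \<omega>) \<partial>N) = (\<integral>\<^sup>+\<omega>. (\<integral>\<^sup>+y. \<psi> y \<partial>K (X \<omega>)) \<partial>N)"
proof -
  have K: "K \<in> distr N borel X \<rightarrow>\<^sub>M subprob_algebra borel"
    using cond_law_subprob_kernel[OF cl] by simp
  have "distr N borel Y = distr N borel X \<bind> K"
  proof (rule measure_eqI)
    show "sets (distr N borel Y) = sets (distr N borel X \<bind> K)"
      using K by (subst sets_bind) (auto dest: subprob_measurableD(2))
    fix B assume "B \<in> sets (distr N borel Y)"
    then have B: "B \<in> sets borel" by simp
    have "emeasure (distr N borel Y) B = emeasure N {\<omega> \<in> space N. X \<omega> \<in> UNIV \<and> Y \<omega> \<in> B}"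
      using Y B by (simp add: emeasure_distr vimage_def Int_def conj_commute)
    also have "\<dots> = (\<integral>\<^sup>+\<omega>. emeasure (K (X \<omega>)) B \<partial>N)"
      using cond_law_emeasure[OF cl _ B, where A=UNIV] by simp
    also have "\<dots> = emeasure (distr N borel X \<bind> K) B"
      using K B X measurable_emeasure_subprob_algebra[OF B] cond_law_subprob_kernel[OF cl]
      by (simp add: emeasure_bind nn_integral_distr)
    finally show "emeasure (distr N borel Y) B = emeasure (distr N borel X \<bind> K) B" .
  qed
  then have "(\<integral>\<^sup>+y. \<psi> y \<partial>distr N borel Y) = (\<integral>\<^sup>+x. (\<integral>\<^sup>+y. \<psi> y \<partial>K x) \<partial>distr N borel X)"
    using \<psi> K by (simp add: nn_integral_bind)
  then show ?thesis
    using X Y \<psi> cond_law_subprob_kernel[OF cl]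
    by (simp add: nn_integral_distr nn_integral_measurable_subprob_algebra)
qed

lemma cond_law_AE_eq:
  assumes "finite_measure N" and X: "X \<in> N \<rightarrow>\<^sub>M borel"
    and cl: "cond_law N X Y K" and cl': "cond_law N X Y K'" and B: "B \<in> sets borel"
  shows "AE x in distr N borel X. emeasure (K x) B = emeasure (K' x) B"
proof -
  interpret D: finite_measure "distr N borel X"
    using assms(1) X by (rule finite_measure.finite_measure_distr)
  have [measurable]: "(\<lambda>x. emeasure (K x) B) \<in> borel_measurable borel"
      "(\<lambda>x. emeasure (K' x) B) \<in> borel_measurable borel"
    using B cond_law_subprob_kernel[OF cl] cond_law_subprob_kernel[OF cl']
    by (auto intro: measurable_compose[OF _ measurable_emeasure_subprob_algebra])
  show ?thesis
  proof (rule D.density_unique2)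
    fix A assume "A \<in> sets (distr N borel X)"
    then have A: "A \<in> sets borel" by simp
    have "(\<integral>\<^sup>+x\<in>A. emeasure (L x) B \<partial>distr N borel X) = emeasure N {\<omega> \<in> space N. X \<omega> \<in> A \<and> Y \<omega> \<in> B}"
      if "cond_law N X Y L" and [measurable]: "(\<lambda>x. emeasure (L x) B) \<in> borel_measurable borel" for L
      using X A B by (simp add: nn_integral_distr cond_law_emeasure[OF that(1)] mult.commute)
    then show "(\<integral>\<^sup>+x\<in>A. emeasure (K x) B \<partial>distr N borel X) = (\<integral>\<^sup>+x\<in>A. emeasure (K' x) B \<partial>distr N borel X)"
      using cl cl' by simp
  qed simp_all
qed

lemma cond_law_transfer:
  fixes X :: "'a \<Rightarrow> 'x::topological_space" and Yt :: "'b \<Rightarrow> 'y::topological_space"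
  assumes "finite_measure N" and X: "X \<in> N \<rightarrow>\<^sub>M borel" and Xt: "Xt \<in> T \<rightarrow>\<^sub>M borel"
    and cl: "cond_law N X Y K" and cl': "cond_law N X Y K'" and clT: "cond_law T Xt Yt K"
    and ac: "absolutely_continuous (distr N borel X) (distr T borel Xt)"
  shows "cond_law T Xt Yt K'"
  unfolding cond_law_def
proof (intro conjI ballI)
  show "K' \<in> borel \<rightarrow>\<^sub>M prob_algebra borel" using cl' unfolding cond_law_def by blast
  fix A :: "'x set" and B :: "'y set" assume A: "A \<in> sets borel" and B: "B \<in> sets borel"
  have "AE x in distr T borel Xt. emeasure (K x) B = emeasure (K' x) B"
    using ac cond_law_AE_eq[OF assms(1) X cl cl' B] by (rule absolutely_continuous_AE[rotated]) simp
  then have "AE \<omega> in T. emeasure (K (Xt \<omega>)) B = emeasure (K' (Xt \<omega>)) B"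
    using Xt by (rule AE_distrD[rotated])
  then show "emeasure T {\<omega> \<in> space T. Xt \<omega> \<in> A \<and> Yt \<omega> \<in> B}
      = (\<integral>\<^sup>+ \<omega>. indicator A (Xt \<omega>) * emeasure (K' (Xt \<omega>)) B \<partial>T)"
    unfolding cond_law_emeasure[OF clT A B] by (auto intro!: nn_integral_cong_AE)
qed

lemma cond_law_cond_event_mixture:
  fixes X :: "'a \<Rightarrow> 'x::topological_space" and Y :: "'a \<Rightarrow> 'y::topological_space"
  assumes "prob_space M" and G: "G \<in> M \<rightarrow>\<^sub>M count_space UNIV" and "finite I"
    and AE_G: "AE \<omega> in M. G \<omega> \<in> I" and pos: "\<forall>i\<in>I. measure M {\<omega>\<in>space M. G \<omega> = i} > 0"
    and X: "X \<in> M \<rightarrow>\<^sub>M borel" and Y: "Y \<in> M \<rightarrow>\<^sub>M borel"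
    and cl: "\<forall>i\<in>I. cond_law (cond_event M (\<lambda>\<omega>. G \<omega> = i)) X Y K"
  shows "cond_law M X Y K"
proof -
  interpret prob_space M by fact
  have "I \<noteq> {}"
    using AE_G by (auto simp: AE_False)
  then have K: "K \<in> borel \<rightarrow>\<^sub>M subprob_algebra borel"
    using cl cond_law_subprob_kernel by blast
  show ?thesis
    unfolding cond_law_def
  proof (intro conjI ballI)
    show "K \<in> borel \<rightarrow>\<^sub>M prob_algebra borel"
      using cl \<open>I \<noteq> {}\<close> unfolding cond_law_def by blast
    fix A :: "'x set" and B :: "'y set"
    assume AB [measurable]: "A \<in> sets borel" "B \<in> sets borel"
    note [measurable] = X Y measurable_compose[OF K measurable_emeasure_subprob_algebra]
    let ?S = "{\<omega> \<in> space M. X \<omega> \<in> A \<and> Y \<omega> \<in> B}"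
    let ?P = "\<lambda>i. measure M {\<omega>\<in>space M. G \<omega> = i}"
    have [measurable]: "?S \<in> sets M" by measurable
    have "emeasure M ?S = (\<Sum>i\<in>I. ennreal (?P i) * emeasure (cond_event M (\<lambda>\<omega>. G \<omega> = i)) ?S)"
      using nn_integral_cond_event_partition[OF finite_measure_axioms G assms(3-5), of "indicator ?S"]
      by simp
    also have "\<dots> = (\<Sum>i\<in>I. ennreal (?P i) *
        (\<integral>\<^sup>+\<omega>. indicator A (X \<omega>) * emeasure (K (X \<omega>)) B \<partial>cond_event M (\<lambda>\<omega>. G \<omega> = i)))"
      using cond_law_emeasure[OF bspec[OF cl] AB] by (intro sum.cong refl arg_cong2[where f="(*)"]) simp
    also have "\<dots> = (\<integral>\<^sup>+\<omega>. indicator A (X \<omega>) * emeasure (K (X \<omega>)) B \<partial>M)"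
      using nn_integral_cond_event_partition[OF finite_measure_axioms G assms(3-5)] by simp
    finally show "emeasure M ?S = (\<integral>\<^sup>+\<omega>. indicator A (X \<omega>) * emeasure (K (X \<omega>)) B \<partial>M)" .
  qed
qed

lemma cond_law_integral:
  fixes X :: "'a \<Rightarrow> 'x::euclidean_space" and f :: "'y::topological_space \<Rightarrow> real"
  assumes cl: "cond_law N X Y K" and q: "distributed N lborel X (\<lambda>x. ennreal (q x))"
    and Y: "Y \<in> N \<rightarrow>\<^sub>M borel" and f: "f \<in> borel_measurable borel"
    and int: "integrable N (\<lambda>\<omega>. f (Y \<omega>))"
  shows "(\<integral>\<^sup>+x. q x * (\<integral>\<^sup>+y. ennreal (f y) \<partial>K x) \<partial>lborel) \<noteq> \<infinity>"
    and "(\<integral>\<^sup>+x. q x * (\<integral>\<^sup>+y. ennreal (- f y) \<partial>K x) \<partial>lborel) \<noteq> \<infinity>"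
    and "(\<integral>\<omega>. f (Y \<omega>) \<partial>N) = enn2real (\<integral>\<^sup>+x. q x * (\<integral>\<^sup>+y. ennreal (f y) \<partial>K x) \<partial>lborel)
                           - enn2real (\<integral>\<^sup>+x. q x * (\<integral>\<^sup>+y. ennreal (- f y) \<partial>K x) \<partial>lborel)"
proof -
  have X: "X \<in> N \<rightarrow>\<^sub>M borel"
    using distributed_measurable[OF q] by simp
  have "(\<integral>\<^sup>+\<omega>. \<psi> (Y \<omega>) \<partial>N) = (\<integral>\<^sup>+x. q x * (\<integral>\<^sup>+y. \<psi> y \<partial>K x) \<partial>lborel)"
    if \<psi>: "\<psi> \<in> borel_measurable borel" for \<psi> :: "'y \<Rightarrow> ennreal"
    using cond_law_nn_integral[OF cl X Y \<psi>] distributed_nn_integral[OF q]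
      measurable_compose[OF cond_law_subprob_kernel[OF cl] nn_integral_measurable_subprob_algebra[OF \<psi>]]
    by simp
  from this[of "\<lambda>y. ennreal (f y)"] this[of "\<lambda>y. ennreal (- f y)"] f int
  show "(\<integral>\<^sup>+x. q x * (\<integral>\<^sup>+y. ennreal (f y) \<partial>K x) \<partial>lborel) \<noteq> \<infinity>"
    and "(\<integral>\<^sup>+x. q x * (\<integral>\<^sup>+y. ennreal (- f y) \<partial>K x) \<partial>lborel) \<noteq> \<infinity>"
    and "(\<integral>\<omega>. f (Y \<omega>) \<partial>N) = enn2real (\<integral>\<^sup>+x. q x * (\<integral>\<^sup>+y. ennreal (f y) \<partial>K x) \<partial>lborel)
                           - enn2real (\<integral>\<^sup>+x. q x * (\<integral>\<^sup>+y. ennreal (- f y) \<partial>K x) \<partial>lborel)"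
    by (simp_all add: real_integrable_def real_lebesgue_integral_def)
qed

section \<open>Identification\<close>

lemma sum_enn2real_nn_integral_weighted:
  fixes q :: "'i \<Rightarrow> 'x \<Rightarrow> real" and t :: "'x \<Rightarrow> real" and F :: "'x \<Rightarrow> ennreal"
  assumes "finite I" and q: "\<forall>i\<in>I. q i \<in> borel_measurable N" "\<forall>i\<in>I. \<forall>x. 0 \<le> q i x"
    and t: "t \<in> borel_measurable N" "\<forall>x. 0 \<le> t x" and F: "F \<in> borel_measurable N"
    and balance: "AE x in N. (\<Sum>i\<in>I. w i * q i x) = t x"
    and fin: "\<forall>i\<in>I. (\<integral>\<^sup>+x. q i x * F x \<partial>N) \<noteq> \<infinity>" "(\<integral>\<^sup>+x. t x * F x \<partial>N) \<noteq> \<infinity>"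
  shows "(\<Sum>i\<in>I. w i * enn2real (\<integral>\<^sup>+x. q i x * F x \<partial>N)) = enn2real (\<integral>\<^sup>+x. t x * F x \<partial>N)"
proof -
  define wp where "wp i = max (w i) 0" for i
  define wn where "wn i = max (- w i) 0" for i
  let ?A = "\<lambda>i. \<integral>\<^sup>+x. q i x * F x \<partial>N"
  let ?qn = "\<lambda>x. \<Sum>i\<in>I. wn i * q i x"
  have w: "w i = wp i - wn i" "0 \<le> wp i" "0 \<le> wn i" for i
    unfolding wp_def wn_def by auto
  have qn: "?qn \<in> borel_measurable N" "0 \<le> ?qn x" for x
    using q w by (auto intro!: borel_measurable_sum borel_measurable_times sum_nonneg)
  \<comment> \<open>Splitting the weights by sign turns the balance into an identity between nonnegative terms.\<close>
  have "(\<Sum>i\<in>I. ennreal (wp i) * ?A i) = (\<integral>\<^sup>+x. ennreal (\<Sum>i\<in>I. wp i * q i x) * F x \<partial>N)"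
    using assms(1) q w F by (subst nn_integral_weighted_sum) auto
  also have "\<dots> = (\<integral>\<^sup>+x. (ennreal (t x) + ennreal (?qn x)) * F x \<partial>N)"
    using balance
  proof (intro nn_integral_cong_AE, eventually_elim)
    case (elim x)
    then have "(\<Sum>i\<in>I. wp i * q i x) = t x + ?qn x"
      by (simp add: w(1) left_diff_distrib sum_subtractf)
    then show ?case
      using t(2) qn(2) by (simp add: ennreal_plus)
  qed
  also have "\<dots> = (\<integral>\<^sup>+x. t x * F x \<partial>N) + (\<integral>\<^sup>+x. ennreal (?qn x) * F x \<partial>N)"
    using t qn F by (simp add: distrib_right nn_integral_add)
  also have "(\<integral>\<^sup>+x. ennreal (?qn x) * F x \<partial>N) = (\<Sum>i\<in>I. ennreal (wn i) * ?A i)"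
    using assms(1) q w F by (subst nn_integral_weighted_sum) auto
  finally have eq: "(\<Sum>i\<in>I. ennreal (wp i) * ?A i)
      = (\<integral>\<^sup>+x. t x * F x \<partial>N) + (\<Sum>i\<in>I. ennreal (wn i) * ?A i)" .
  have enn2real_weighted: "enn2real (\<Sum>i\<in>I. ennreal (c i) * ?A i) = (\<Sum>i\<in>I. c i * enn2real (?A i))"
    if "\<And>i. 0 \<le> c i" for c
    using fin(1) that by (subst enn2real_sum) (auto simp: enn2real_mult ennreal_mult_less_top top.not_eq_extremum)
  have "(\<Sum>i\<in>I. ennreal (wn i) * ?A i) < \<infinity>"
    using fin(1) w(3) assms(1) by (simp add: ennreal_mult_less_top top.not_eq_extremum)
  then have "(\<Sum>i\<in>I. wp i * enn2real (?A i))
      = enn2real (\<integral>\<^sup>+x. t x * F x \<partial>N) + (\<Sum>i\<in>I. wn i * enn2real (?A i))"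
    using arg_cong[OF eq, of enn2real] fin(2) w(2,3)
    by (simp add: enn2real_weighted enn2real_plus top.not_eq_extremum)
  then show ?thesis
    by (simp add: w(1) left_diff_distrib sum_subtractf)
qed

lemma AE_weighted_sum_eq_of_test_integrals:
  fixes q :: "'i \<Rightarrow> 'x \<Rightarrow> real" and t :: "'x \<Rightarrow> real"
  assumes "finite I" and q: "\<forall>i\<in>I. integrable N (q i)" and t: "integrable N t"
    and test: "\<And>f. f \<in> borel_measurable N \<Longrightarrow> (\<And>x. \<bar>f x\<bar> \<le> 1) \<Longrightarrow>
      (\<Sum>i\<in>I. w i * (\<integral>x. q i x * f x \<partial>N)) = (\<integral>x. t x * f x \<partial>N)"
  shows "AE x in N. (\<Sum>i\<in>I. w i * q i x) = t x"
proof -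
  define d where "d x = (\<Sum>i\<in>I. w i * q i x) - t x" for x
  have d: "integrable N d"
    unfolding d_def using q t by (intro Bochner_Integration.integrable_diff integrable_sum integrable_mult_right) auto
  define f where "f x = sgn (d x)" for x
  have [measurable]: "d \<in> borel_measurable N"
    using d by simp
  have f: "f \<in> borel_measurable N" "\<bar>f x\<bar> \<le> 1" for x
    unfolding f_def by (auto simp: sgn_real_def)
  have integrable_f: "integrable N (\<lambda>x. g x * f x)" if "integrable N g" for g
    using that f by (intro Bochner_Integration.integrable_bound[OF that]) (auto simp: abs_mult intro!: mult_left_le)
  \<comment> \<open>Testing against the sign of the discrepancy yields its L1 norm.\<close>
  have "\<bar>d x\<bar> = d x * f x" for x
    by (simp add: f_def sgn_real_def)
  also have "d x * f x = (\<Sum>i\<in>I. w i * (q i x * f x)) - t x * f x" for x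
    by (simp add: d_def left_diff_distrib sum_distrib_right mult.assoc)
  finally have "(\<integral>x. \<bar>d x\<bar> \<partial>N) = (\<integral>x. (\<Sum>i\<in>I. w i * (q i x * f x)) - t x * f x \<partial>N)"
    by simp
  also have "\<dots> = (\<Sum>i\<in>I. w i * (\<integral>x. q i x * f x \<partial>N)) - (\<integral>x. t x * f x \<partial>N)"
    using q t integrable_f by (simp add: Bochner_Integration.integral_diff integrable_sum)
  also have "\<dots> = 0"
    using test[OF f] by simp
  finally have "AE x in N. \<bar>d x\<bar> = 0"
    using integrable_abs[OF d] by (subst (asm) integral_nonneg_eq_0_iff_AE) auto
  then show ?thesis
    by eventually_elim (simp add: d_def)
qed

lemma weighted_integrals_eq_of_common_cond_law:
  fixes N :: "'i \<Rightarrow> 'a measure" and X :: "'a \<Rightarrow> 'x::euclidean_space" and Xt :: "'b \<Rightarrow> 'x"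
    and Y :: "'a \<Rightarrow> 'y::topological_space" and Yt :: "'b \<Rightarrow> 'y" and f :: "'y \<Rightarrow> real"
  assumes "finite I"
    and cl: "\<forall>i\<in>I. cond_law (N i) X Y K" and cl_T: "cond_law T Xt Yt K"
    and q: "\<forall>i\<in>I. distributed (N i) lborel X (\<lambda>x. ennreal (q i x))" "\<forall>i x. 0 \<le> q i x"
    and t: "distributed T lborel Xt (\<lambda>x. ennreal (t x))" "\<forall>x. 0 \<le> t x"
    and balance: "AE x in lborel. (\<Sum>i\<in>I. w i * q i x) = t x"
    and Y: "\<forall>i\<in>I. Y \<in> N i \<rightarrow>\<^sub>M borel" and Yt: "Yt \<in> T \<rightarrow>\<^sub>M borel"
    and f: "f \<in> borel_measurable borel"
    and int: "\<forall>i\<in>I. integrable (N i) (\<lambda>\<omega>. f (Y \<omega>))" and int_T: "integrable T (\<lambda>\<omega>. f (Yt \<omega>))"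
  shows "(\<Sum>i\<in>I. w i * (\<integral>\<omega>. f (Y \<omega>) \<partial>N i)) = (\<integral>\<omega>. f (Yt \<omega>) \<partial>T)"
proof -
  note strata = cond_law_integral[OF bspec[OF cl] bspec[OF q(1)] bspec[OF Y] f bspec[OF int]]
  note target = cond_law_integral[OF cl_T t(1) Yt f int_T]
  have q_meas: "\<forall>i\<in>I. q i \<in> borel_measurable lborel"
    using q(2) distributed_real_measurable[OF _ q(1)[rule_format]] by simp
  have t_meas: "t \<in> borel_measurable lborel"
    using t(2) distributed_real_measurable[OF _ t(1)] by simp
  have weighted: "(\<Sum>i\<in>I. w i * enn2real (\<integral>\<^sup>+x. q i x * (\<integral>\<^sup>+y. \<psi> y \<partial>K x) \<partial>lborel))
      = enn2real (\<integral>\<^sup>+x. t x * (\<integral>\<^sup>+y. \<psi> y \<partial>K x) \<partial>lborel)"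
    if "\<psi> \<in> borel_measurable borel"
      "\<forall>i\<in>I. (\<integral>\<^sup>+x. q i x * (\<integral>\<^sup>+y. \<psi> y \<partial>K x) \<partial>lborel) \<noteq> \<infinity>"
      "(\<integral>\<^sup>+x. t x * (\<integral>\<^sup>+y. \<psi> y \<partial>K x) \<partial>lborel) \<noteq> \<infinity>" for \<psi>
    using q(2) measurable_compose[OF cond_law_subprob_kernel[OF cl_T]
        nn_integral_measurable_subprob_algebra[OF that(1)]]
    by (intro sum_enn2real_nn_integral_weighted \<open>finite I\<close> q_meas t_meas t(2) balance that(2,3)) auto
  have f_pos: "(\<lambda>y. ennreal (f y)) \<in> borel_measurable borel"
    and f_neg: "(\<lambda>y. ennreal (- f y)) \<in> borel_measurable borel"
    using f by simp_all
  have "(\<Sum>i\<in>I. w i * (\<integral>\<omega>. f (Y \<omega>) \<partial>N i))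
      = (\<Sum>i\<in>I. w i * (enn2real (\<integral>\<^sup>+x. q i x * (\<integral>\<^sup>+y. ennreal (f y) \<partial>K x) \<partial>lborel)
          - enn2real (\<integral>\<^sup>+x. q i x * (\<integral>\<^sup>+y. ennreal (- f y) \<partial>K x) \<partial>lborel)))"
    by (intro sum.cong refl arg_cong2[where f="(*)"] strata(3))
  also have "\<dots> = enn2real (\<integral>\<^sup>+x. t x * (\<integral>\<^sup>+y. ennreal (f y) \<partial>K x) \<partial>lborel)
      - enn2real (\<integral>\<^sup>+x. t x * (\<integral>\<^sup>+y. ennreal (- f y) \<partial>K x) \<partial>lborel)"
    unfolding right_diff_distrib sum_subtractf
    using weighted[OF f_pos _ target(1)] weighted[OF f_neg _ target(2)] strata(1,2) by simp
  also have "\<dots> = (\<integral>\<omega>. f (Yt \<omega>) \<partial>T)"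
    by (rule target(3)[symmetric])
  finally show ?thesis .
qed

lemma weighted_cond_event_integrals_eq_target_integral:
  fixes X :: "'a \<Rightarrow> 'x::euclidean_space" and Xt :: "'b \<Rightarrow> 'x"
    and Y :: "'a \<Rightarrow> 'y::topological_space" and Yt :: "'b \<Rightarrow> 'y" and f :: "'y \<Rightarrow> real"
  assumes "prob_space M" and G: "G \<in> M \<rightarrow>\<^sub>M count_space UNIV" and "finite I"
    and "AE \<omega> in M. G \<omega> \<in> I" and pos: "\<forall>i\<in>I. measure M {\<omega>\<in>space M. G \<omega> = i} > 0"
    and Y: "Y \<in> M \<rightarrow>\<^sub>M borel" and Yt: "Yt \<in> T \<rightarrow>\<^sub>M borel"
    and p: "distributed M lborel X (\<lambda>x. ennreal (p x))" "\<forall>x. 0 \<le> p x"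
    and q: "\<forall>i\<in>I. distributed (cond_event M (\<lambda>\<omega>. G \<omega> = i)) lborel X (\<lambda>x. ennreal (q i x))"
      "\<forall>i x. 0 \<le> q i x"
    and t: "distributed T lborel Xt (\<lambda>x. ennreal (t x))" "\<forall>x. 0 \<le> t x"
    and support: "AE x in lborel. p x = 0 \<longrightarrow> t x = 0"
    and balance: "AE x in lborel. p x > 0 \<longrightarrow> (\<Sum>i\<in>I. w i * q i x) = t x"
    and cl_strata: "\<forall>i\<in>I. cond_law (cond_event M (\<lambda>\<omega>. G \<omega> = i)) X Y K'"
    and cl_M: "cond_law M X Y K" and cl_T: "cond_law T Xt Yt K"
    and f: "f \<in> borel_measurable borel"
    and int_M: "integrable M (\<lambda>\<omega>. f (Y \<omega>))" and int_T: "integrable T (\<lambda>\<omega>. f (Yt \<omega>))"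
  shows "(\<Sum>i\<in>I. w i * (\<integral>\<omega>. f (Y \<omega>) \<partial>cond_event M (\<lambda>\<omega>. G \<omega> = i))) = (\<integral>\<omega>. f (Yt \<omega>) \<partial>T)"
proof -
  interpret prob_space M by fact
  have X: "X \<in> M \<rightarrow>\<^sub>M borel" and Xt: "Xt \<in> T \<rightarrow>\<^sub>M borel"
    using distributed_measurable[OF p(1)] distributed_measurable[OF t(1)] by simp_all
  \<comment> \<open>The study kernel of (A2a) describes the whole study population, hence by (I)(c) also the target.\<close>
  have "cond_law M X Y K'"
    using assms(1-5) X Y cl_strata by (rule cond_law_cond_event_mixture)
  then have "cond_law T Xt Yt K'"
    by (rule cond_law_transfer[OF finite_measure_axioms X Xt cl_M _ cl_T
          absolutely_continuous_distributed[OF p t(1) support]])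
  moreover have "AE x in lborel. (\<Sum>i\<in>I. w i * q i x) = t x"
    using finite_measure_axioms assms(2-5) p q support balance by (rule AE_weighted_density_balance)
  ultimately show ?thesis
    using \<open>finite I\<close> cl_strata q t Y Yt f int_T finite_measure_axioms int_M pos G
    by (intro weighted_integrals_eq_of_common_cond_law) (auto intro: integrable_cond_event)
qed

lemma identification_of_density_balance:
  fixes X :: "'a \<Rightarrow> 'x::euclidean_space" and Xt :: "'b \<Rightarrow> 'x"
    and Y1 Y0 :: "'a \<Rightarrow> real" and Y1t Y0t :: "'b \<Rightarrow> real"
  assumes "prob_space M" and "G \<in> M \<rightarrow>\<^sub>M count_space UNIV" and "finite I"
    and "AE \<omega> in M. G \<omega> \<in> I" and "\<forall>i\<in>I. measure M {\<omega>\<in>space M. G \<omega> = i} > 0"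
    and "distributed M lborel X (\<lambda>x. ennreal (p x))" "\<forall>x. 0 \<le> p x"
    and "\<forall>i\<in>I. distributed (cond_event M (\<lambda>\<omega>. G \<omega> = i)) lborel X (\<lambda>x. ennreal (q i x))"
      "\<forall>i x. 0 \<le> q i x"
    and "distributed T lborel Xt (\<lambda>x. ennreal (t x))" "\<forall>x. 0 \<le> t x"
    and "AE x in lborel. p x = 0 \<longrightarrow> t x = 0"
    and "AE x in lborel. p x > 0 \<longrightarrow> (\<Sum>i\<in>I. w i * q i x) = t x"
    and "\<forall>i\<in>I. cond_law (cond_event M (\<lambda>\<omega>. G \<omega> = i)) X (\<lambda>\<omega>. (Y1 \<omega>, Y0 \<omega>)) K'"
    and "cond_law M X (\<lambda>\<omega>. (Y1 \<omega>, Y0 \<omega>)) K" and "cond_law T Xt (\<lambda>\<omega>. (Y1t \<omega>, Y0t \<omega>)) K"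
    and "Y1 \<in> borel_measurable M" "Y0 \<in> borel_measurable M" "integrable M Y1" "integrable M Y0"
    and "Y1t \<in> borel_measurable T" "Y0t \<in> borel_measurable T" "integrable T Y1t" "integrable T Y0t"
    and estimators: "\<forall>i\<in>I. integrable S (tauhat i) \<and>
      integral\<^sup>L S (tauhat i) = (\<integral>\<omega>. Y1 \<omega> - Y0 \<omega> \<partial>cond_event M (\<lambda>\<omega>. G \<omega> = i))"
  shows "(\<integral>s. (\<Sum>i\<in>I. w i * tauhat i s) \<partial>S) = (\<integral>\<omega>. Y1t \<omega> - Y0t \<omega> \<partial>T)"
proof -
  have "(\<lambda>(y1, y0). y1 - y0 :: real) \<in> borel_measurable borel"
    unfolding case_prod_beta by (intro borel_measurable_continuous_onI continuous_intros)
  then have "(\<Sum>i\<in>I. w i * (\<integral>\<omega>. (\<lambda>(y1, y0). y1 - y0) (Y1 \<omega>, Y0 \<omega>) \<partial>cond_event M (\<lambda>\<omega>. G \<omega> = i)))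
      = (\<integral>\<omega>. (\<lambda>(y1, y0). y1 - y0) (Y1t \<omega>, Y0t \<omega>) \<partial>T)"
    using assms(17-24) by (intro weighted_cond_event_integrals_eq_target_integral[OF assms(1-5) _ _ assms(6-16)]) auto
  then show ?thesis
    using estimators by (simp add: Bochner_Integration.integral_sum)
qed

lemma density_balance_of_covariate_tests:
  fixes X :: "'a \<Rightarrow> 'x::euclidean_space" and Xt :: "'b \<Rightarrow> 'x"
  assumes "prob_space M" and "prob_space T" and "G \<in> M \<rightarrow>\<^sub>M count_space UNIV" and "finite I"
    and "\<forall>i\<in>I. measure M {\<omega>\<in>space M. G \<omega> = i} > 0"
    and q: "\<forall>i\<in>I. distributed (cond_event M (\<lambda>\<omega>. G \<omega> = i)) lborel X (\<lambda>x. ennreal (q i x))"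
      "\<forall>i x. 0 \<le> q i x"
    and t: "distributed T lborel Xt (\<lambda>x. ennreal (t x))" "\<forall>x. 0 \<le> t x"
    and test: "\<And>f. f \<in> borel_measurable borel \<Longrightarrow> (\<And>x. \<bar>f x\<bar> \<le> 1) \<Longrightarrow>
      (\<Sum>i\<in>I. w i * (\<integral>\<omega>. f (X \<omega>) \<partial>cond_event M (\<lambda>\<omega>. G \<omega> = i))) = (\<integral>\<omega>. f (Xt \<omega>) \<partial>T)"
  shows "AE x in lborel. (\<Sum>i\<in>I. w i * q i x) = t x"
proof (rule AE_weighted_sum_eq_of_test_integrals[OF \<open>finite I\<close>])
  show "\<forall>i\<in>I. integrable lborel (q i)"
  proof
    fix i assume i: "i \<in> I"
    then have "prob_space (cond_event M (\<lambda>\<omega>. G \<omega> = i))"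
      using assms(1,3,5) by (intro prob_space_cond_event prob_space.axioms(1)) auto
    then show "integrable lborel (q i)"
      using q i by (intro integrable_distributed_density[OF prob_space.axioms(1)]) auto
  qed
  show "integrable lborel t"
    using assms(2) t by (intro integrable_distributed_density[OF prob_space.axioms(1)]) auto
  fix f :: "'x \<Rightarrow> real" assume "f \<in> borel_measurable lborel" "\<And>x. \<bar>f x\<bar> \<le> 1"
  moreover have "(\<integral>\<omega>. f (X \<omega>) \<partial>cond_event M (\<lambda>\<omega>. G \<omega> = i)) = (\<integral>x. q i x * f x \<partial>lborel)"
    if "i \<in> I" "f \<in> borel_measurable lborel" for i
    using distributed_integral[OF bspec[OF q(1) that(1)] that(2)] q(2) by simp
  moreover have "(\<integral>\<omega>. f (Xt \<omega>) \<partial>T) = (\<integral>x. t x * f x \<partial>lborel)" if "f \<in> borel_measurable lborel"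
    using distributed_integral[OF t(1) that] t(2) by simp
  ultimately show "(\<Sum>i\<in>I. w i * (\<integral>x. q i x * f x \<partial>lborel)) = (\<integral>x. t x * f x \<partial>lborel)"
    using test[of f] by simp
qed

lemma in_Y_all_covariate_functions:
  "in_Y_all M G X (\<lambda>\<omega>. f (X \<omega>)) (\<lambda>\<omega>. g (X \<omega>))"
  unfolding in_Y_all_def
  by (rule exI[of _ "\<lambda>z x _ _. if z then f x else g x"], rule exI[of _ "\<lambda>_ _ _. 0"],
      rule exI[of _ "\<lambda>_ _ _ _. 0"]) simp

lemma covariate_function_model_admissible:
  fixes X :: "'a \<Rightarrow> 'x::topological_space" and Xt :: "'b \<Rightarrow> 'x" and f :: "'x \<Rightarrow> real"
    and c :: "nat \<Rightarrow> real"
  assumes "prob_space M" "prob_space T" "prob_space S"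
    and X: "X \<in> M \<rightarrow>\<^sub>M borel" and Xt: "Xt \<in> T \<rightarrow>\<^sub>M borel"
    and f: "f \<in> borel_measurable borel" "\<And>x. \<bar>f x\<bar> \<le> 1"
  shows "in_Y_all M G X (\<lambda>\<omega>. f (X \<omega>)) (\<lambda>_. 0) \<and>
    (\<lambda>\<omega>. f (X \<omega>)) \<in> borel_measurable M \<and> (\<lambda>_. 0::real) \<in> borel_measurable M \<and>
    integrable M (\<lambda>\<omega>. f (X \<omega>)) \<and> integrable M (\<lambda>_. 0::real) \<and>
    (\<lambda>\<omega>. f (Xt \<omega>)) \<in> borel_measurable T \<and> (\<lambda>_. 0::real) \<in> borel_measurable T \<and>
    integrable T (\<lambda>\<omega>. f (Xt \<omega>)) \<and> integrable T (\<lambda>_. 0::real) \<and>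
    same_cond_law (cond_event M Z) X (\<lambda>\<omega>. (f (X \<omega>), 0::real))
      (cond_event M (\<lambda>\<omega>. \<not> Z \<omega>)) X (\<lambda>\<omega>. (f (X \<omega>), 0)) \<and>
    same_cond_law T Xt (\<lambda>\<omega>. (f (Xt \<omega>), 0::real)) M X (\<lambda>\<omega>. (f (X \<omega>), 0)) \<and>
    (\<exists>K. \<forall>i\<in>I. cond_law (cond_event M (\<lambda>\<omega>. G \<omega> = i)) X (\<lambda>\<omega>. (f (X \<omega>), 0::real)) K) \<and>
    prob_space S \<and>
    (\<forall>i\<in>I. (\<lambda>_. c i) \<in> borel_measurable S \<and> integrable S (\<lambda>_. c i) \<and> integral\<^sup>L S (\<lambda>_. c i) = c i)"
proof (intro conjI ballI exI)
  interpret M: prob_space M by fact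
  interpret T: prob_space T by fact
  interpret S: prob_space S by fact
  have F: "(\<lambda>x. (f x, 0::real)) \<in> borel_measurable borel"
    using f by simp
  show "in_Y_all M G X (\<lambda>\<omega>. f (X \<omega>)) (\<lambda>_. 0)"
    by (rule in_Y_all_covariate_functions)
  show "integrable M (\<lambda>\<omega>. f (X \<omega>))" "integrable T (\<lambda>\<omega>. f (Xt \<omega>))"
    using X Xt f by (auto intro: M.integrable_const_bound[of _ 1] T.integrable_const_bound[of _ 1])
  show "same_cond_law (cond_event M Z) X (\<lambda>\<omega>. (f (X \<omega>), 0::real))
      (cond_event M (\<lambda>\<omega>. \<not> Z \<omega>)) X (\<lambda>\<omega>. (f (X \<omega>), 0))"
    using X F by (intro same_cond_law_covariate_function) simp_all
  show "same_cond_law T Xt (\<lambda>\<omega>. (f (Xt \<omega>), 0::real)) M X (\<lambda>\<omega>. (f (X \<omega>), 0))"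
    using Xt X F by (rule same_cond_law_covariate_function)
  show "cond_law (cond_event M (\<lambda>\<omega>. G \<omega> = i)) X (\<lambda>\<omega>. (f (X \<omega>), 0::real))
      (\<lambda>x. return borel (f x, 0))" for i
    using X F by (intro cond_law_deterministic) simp_all
  show "integrable S (\<lambda>_. c i)" "integral\<^sup>L S (\<lambda>_. c i) = c i" for i
    by (simp_all add: S.prob_space)
qed (use X Xt f assms(3) in simp_all)

theorem proposition1:
  fixes M :: "'a measure" and T :: "'b measure"
    and G :: "'a \<Rightarrow> nat" and Z :: "'a \<Rightarrow> bool"
    and X :: "'a \<Rightarrow> 'x::euclidean_space" and Xt :: "'b \<Rightarrow> 'x"
    and m :: nat and w :: "nat \<Rightarrow> real"
    and p :: "'x \<Rightarrow> real" and pG :: "nat \<Rightarrow> 'x \<Rightarrow> real"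
    and pZ :: "bool \<Rightarrow> 'x \<Rightarrow> real" and t :: "'x \<Rightarrow> real"
  assumes "prob_space M" and "prob_space T"
    and "G \<in> M \<rightarrow>\<^sub>M count_space UNIV" and "Z \<in> M \<rightarrow>\<^sub>M count_space UNIV"
    and "X \<in> borel_measurable M" and "Xt \<in> borel_measurable T"
    and "AE \<omega> in M. G \<omega> \<in> {1..m}"
    and "\<forall>i \<in> {1..m}. measure M {\<omega> \<in> space M. G \<omega> = i} > 0"
    and "\<forall>z. measure M {\<omega> \<in> space M. Z \<omega> = z} > 0"
    and "p \<in> borel_measurable borel" and "\<forall>x. 0 \<le> p x"
    and "\<forall>i. pG i \<in> borel_measurable borel" and "\<forall>i x. 0 \<le> pG i x"
    and "\<forall>z. pZ z \<in> borel_measurable borel" and "\<forall>z x. 0 \<le> pZ z x"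
    and "t \<in> borel_measurable borel" and "\<forall>x. 0 \<le> t x"
    and "distributed M lborel X (\<lambda>x. ennreal (p x))"
    and "\<forall>i \<in> {1..m}. distributed (cond_event M (\<lambda>\<omega>. G \<omega> = i)) lborel X (\<lambda>x. ennreal (pG i x))"
    and "\<forall>z. distributed (cond_event M (\<lambda>\<omega>. Z \<omega> = z)) lborel X (\<lambda>x. ennreal (pZ z x))"
    and "distributed T lborel Xt (\<lambda>x. ennreal (t x))"
    \<comment> \<open>Assumption (I)(a): Supp(T_X) is contained in Supp(P_{1,X}) and Supp(P_{0,X})\<close>
    and "{x. t x > 0} \<subseteq> {x. pZ True x > 0} \<inter> {x. pZ False x > 0}"
  shows
    "(AE x in lborel. p x > 0 \<longrightarrow> (\<Sum>i = 1..m. w i * pG i x) = t x)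
     \<longleftrightarrow>
     (\<forall>(Y1 :: 'a \<Rightarrow> real) (Y0 :: 'a \<Rightarrow> real) (Y1t :: 'b \<Rightarrow> real) (Y0t :: 'b \<Rightarrow> real)
        (S :: 's measure) (tauhat :: nat \<Rightarrow> 's \<Rightarrow> real).
        in_Y_all M G X Y1 Y0 \<and>
        Y1 \<in> borel_measurable M \<and> Y0 \<in> borel_measurable M \<and>
        integrable M Y1 \<and> integrable M Y0 \<and>
        Y1t \<in> borel_measurable T \<and> Y0t \<in> borel_measurable T \<and>
        integrable T Y1t \<and> integrable T Y0t \<and>
        \<comment> \<open>(I)(b)\<close>
        same_cond_law (cond_event M (\<lambda>\<omega>. Z \<omega>)) X (\<lambda>\<omega>. (Y1 \<omega>, Y0 \<omega>))
                      (cond_event M (\<lambda>\<omega>. \<not> Z \<omega>)) X (\<lambda>\<omega>. (Y1 \<omega>, Y0 \<omega>)) \<and>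
        \<comment> \<open>(I)(c)\<close>
        same_cond_law T Xt (\<lambda>\<omega>. (Y1t \<omega>, Y0t \<omega>)) M X (\<lambda>\<omega>. (Y1 \<omega>, Y0 \<omega>)) \<and>
        \<comment> \<open>(A2a)\<close>
        (\<exists>K. \<forall>i \<in> {1..m}. cond_law (cond_event M (\<lambda>\<omega>. G \<omega> = i)) X (\<lambda>\<omega>. (Y1 \<omega>, Y0 \<omega>)) K) \<and>
        \<comment> \<open>(A2b)\<close>
        prob_space S \<and>
        (\<forall>i \<in> {1..m}. tauhat i \<in> borel_measurable S \<and> integrable S (tauhat i) \<and>
           integral\<^sup>L S (tauhat i) = integral\<^sup>L (cond_event M (\<lambda>\<omega>. G \<omega> = i)) (\<lambda>\<omega>. Y1 \<omega> - Y0 \<omega>))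
      \<longrightarrow> integral\<^sup>L S (\<lambda>s. \<Sum>i = 1..m. w i * tauhat i s) = integral\<^sup>L T (\<lambda>\<omega>. Y1t \<omega> - Y0t \<omega>))"
proof -
  interpret M: prob_space M by fact
  have support: "AE x in lborel. p x = 0 \<longrightarrow> t x = 0"
    using M.finite_measure_axioms assms(4,9,11,15,17,18,20,22)
    by (intro AE_density_vanishes_of_support[where z=True]) auto
  show ?thesis
  proof (intro iffI allI impI, goal_cases)
    case (1 Y1 Y0 Y1t Y0t S tauhat)
    then obtain K K' where "cond_law T Xt (\<lambda>\<omega>. (Y1t \<omega>, Y0t \<omega>)) K" "cond_law M X (\<lambda>\<omega>. (Y1 \<omega>, Y0 \<omega>)) K"
      and "\<forall>i\<in>{1..m}. cond_law (cond_event M (\<lambda>\<omega>. G \<omega> = i)) X (\<lambda>\<omega>. (Y1 \<omega>, Y0 \<omega>)) K'"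
      unfolding same_cond_law_def by blast
    with 1 show ?case
      by (intro identification_of_density_balance[OF assms(1,3) finite_atLeastAtMost assms(7,8,18,11,19,13,21,17)
          support]) auto
  next
    case 2
    have "AE x in lborel. (\<Sum>i = 1..m. w i * pG i x) = t x"
    proof (rule density_balance_of_covariate_tests[OF assms(1-3) finite_atLeastAtMost assms(8,19,13,21,17)])
      fix f :: "'x \<Rightarrow> real" assume f: "f \<in> borel_measurable borel" "\<And>x. \<bar>f x\<bar> \<le> 1"
      \<comment> \<open>Instantiate (ii) with Y(1) = f(X), Y(0) = 0 and estimators equal to their expectations.\<close>
      define S :: "'s measure" where "S = return (count_space UNIV) undefined"
      have S: "prob_space S"
        unfolding S_def by (rule prob_space_return) simp
      from 2[rule_format, OF covariate_function_model_admissible[OF assms(1,2) S assms(5,6) f,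
            where c="\<lambda>i. \<integral>\<omega>. f (X \<omega>) - 0 \<partial>cond_event M (\<lambda>\<omega>. G \<omega> = i)"]]
      show "(\<Sum>i = 1..m. w i * (\<integral>\<omega>. f (X \<omega>) \<partial>cond_event M (\<lambda>\<omega>. G \<omega> = i))) = (\<integral>\<omega>. f (Xt \<omega>) \<partial>T)"
        using S by (simp add: prob_space.prob_space)
    qed
    then show ?case
      by (auto elim: AE_mp)
  qed
qed

end
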